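(* There exists $N$ such that for every integer $n\ge N$, the quantity $$S_n=\sum_{c=2}^{\lfloor n/2\rfloor}\binom{n}{c}(2^c-1)^{n-c}+\sum_{c=\lfloor n/2\rfloor+1}^{n-2}\binom{n}{c}(2^{n-c}-1)^{c}$$ satisfies $H_n\le S_n\le\big(1+(3/2)^{-n/3}\big)H_n$, where $H_n$ is the number of labeled split graphs with vertex set $[n]$ whose questioning set is empty.
   Context: $[n]=\{1,\dots,n\}$; labeled graphs on $[n]$ are distinct if their edge sets differ. A split partition of a graph $G$ is an ordered pair $(C',I')$ of disjoint sets (possibly empty) with $C'\cup I'=V(G)$, $C'$ a clique and $I'$ an independent set; $G$ is a split graph if it has a split partition. The questioning set of a split graph is the set of vertices $v$ for which there is a split partition with $v\in C'$ and a split partition with $v\in I'$. *)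

theory Defs
  imports Complex_Main
begin

text \<open>Labeled simple graphs on [n] = {1..n}, identified with their edge sets:
  sets of 2-element subsets of {1..n}.\<close>

definition all_edges :: "nat \<Rightarrow> nat set set" where
  "all_edges n = {e. e \<subseteq> {1..n} \<and> card e = 2}"

definition is_clique :: "nat set set \<Rightarrow> nat set \<Rightarrow> bool" where
  "is_clique E C \<longleftrightarrow> (\<forall>u\<in>C. \<forall>v\<in>C. u \<noteq> v \<longrightarrow> {u, v} \<in> E)"

definition is_indep :: "nat set set \<Rightarrow> nat set \<Rightarrow> bool" where
  "is_indep E I \<longleftrightarrow> (\<forall>u\<in>I. \<forall>v\<in>I. u \<noteq> v \<longrightarrow> {u, v} \<notin> E)"

definition split_partition :: "nat \<Rightarrow> nat set set \<Rightarrow> nat set \<Rightarrow> nat set \<Rightarrow> bool" where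
  "split_partition n E C I \<longleftrightarrow>
     C \<inter> I = {} \<and> C \<union> I = {1..n} \<and> is_clique E C \<and> is_indep E I"

definition is_split_graph :: "nat \<Rightarrow> nat set set \<Rightarrow> bool" where
  "is_split_graph n E \<longleftrightarrow> (\<exists>C I. split_partition n E C I)"

definition questioning_set :: "nat \<Rightarrow> nat set set \<Rightarrow> nat set" where
  "questioning_set n E = {v. (\<exists>C I. split_partition n E C I \<and> v \<in> C) \<and>
                            (\<exists>C I. split_partition n E C I \<and> v \<in> I)}"

definition H :: "nat \<Rightarrow> nat" where
  "H n = card {E. E \<subseteq> all_edges n \<and> is_split_graph n E \<and> questioning_set n E = {}}"

definition S :: "nat \<Rightarrow> nat" where
  "S n = (\<Sum>c = 2..n div 2. (n choose c) * (2 ^ c - 1) ^ (n - c))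
       + (\<Sum>c = n div 2 + 1..n - 2. (n choose c) * (2 ^ (n - c) - 1) ^ c)"

end

theory Submission
  imports Defs "HOL-Library.FuncSet" "HOL-Real_Asymp.Real_Asymp"
begin

text \<open>A split graph with empty questioning set has a unique split partition \<open>(C, I)\<close>,
  characterised by two rigidity conditions: every vertex of \<open>I\<close> has a non-neighbour in \<open>C\<close>
  (\<open>C\<close> is a maximal clique) and every vertex of \<open>C\<close> has a neighbour in \<open>I\<close> (\<open>I\<close> is a maximal
  independent set); together they force \<open>2 \<le> |C| \<le> n - 2\<close>.  For fixed \<open>C\<close>, the graphs with
  split partition \<open>(C, I)\<close> correspond to arbitrary choices of the \<open>C\<close>-\<open>I\<close> edges.  Imposing only
  the first condition when \<open>|C| \<le> n/2\<close>, and only the second otherwise, gives exactly the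
  summands of \<open>S\<^sub>n\<close>, so \<open>H\<^sub>n \<le> S\<^sub>n\<close>.  If \<open>a\<close> is the size of the side on which the dropped
  condition lives and \<open>b \<ge> n/2\<close> the size of the other side, a union bound over that side shows
  that the graphs violating it form at most a fraction \<open>a (2^(a-1) / (2^a - 1))^b \<le> n (2/3)^(n/2)\<close>
  of those counted, and \<open>n (2/3)^(n/2)\<close> is eventually below \<open>(3/2)^(-n/3) / 2\<close>.\<close>

definition partition_graphs :: "nat \<Rightarrow> nat set \<Rightarrow> nat set set set" where
  "partition_graphs n C = {E. E \<subseteq> all_edges n \<and> split_partition n E C ({1..n} - C)}"

definition clique_maximal :: "nat \<Rightarrow> nat set \<Rightarrow> nat set set \<Rightarrow> bool" where
  "clique_maximal n C E \<longleftrightarrow> (\<forall>v\<in>{1..n} - C. \<exists>u\<in>C. {u, v} \<notin> E)"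

definition indep_maximal :: "nat \<Rightarrow> nat set \<Rightarrow> nat set set \<Rightarrow> bool" where
  "indep_maximal n C E \<longleftrightarrow> (\<forall>u\<in>C. \<exists>v\<in>{1..n} - C. {u, v} \<in> E)"

definition rigid_graphs :: "nat \<Rightarrow> nat set \<Rightarrow> nat set set set" where
  "rigid_graphs n C = {E \<in> partition_graphs n C. clique_maximal n C E \<and> indep_maximal n C E}"

definition clique_parts :: "nat \<Rightarrow> nat set set" where
  "clique_parts n = {C. C \<subseteq> {1..n} \<and> 2 \<le> card C \<and> card C \<le> n - 2}"

lemma split_partition_indep_eq:
  "split_partition n E C I \<Longrightarrow> I = {1..n} - C \<and> C \<subseteq> {1..n}"
  unfolding split_partition_def by blast

lemma edge_in_all_edges_iff:
  "{a, b} \<in> all_edges n \<longleftrightarrow> a \<noteq> b \<and> a \<in> {1..n} \<and> b \<in> {1..n}"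
  unfolding all_edges_def by (cases "a = b") auto

lemma in_all_edgesE:
  assumes "e \<in> all_edges n"
  obtains a b where "e = {a, b}" "a \<noteq> b" "a \<in> {1..n}" "b \<in> {1..n}"
  using assms unfolding all_edges_def card_2_iff by blast

lemma finite_all_edges: "finite (all_edges n)"
  unfolding all_edges_def by (rule finite_subset[where B = "Pow {1..n}"]) auto

lemma finite_partition_graphs: "finite (partition_graphs n C)"
  unfolding partition_graphs_def
  by (rule finite_subset[where B = "Pow (all_edges n)"]) (auto simp: finite_all_edges)

lemma finite_rigid_graphs: "finite (rigid_graphs n C)"
  unfolding rigid_graphs_def using finite_partition_graphs by auto

lemma finite_clique_parts: "finite (clique_parts n)"
  unfolding clique_parts_def by (rule finite_subset[where B = "Pow {1..n}"]) auto

section \<open>Rigid split partitions\<close>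

lemma split_partition_move_to_clique:
  assumes "split_partition n E C I" "v \<in> I" "\<forall>u\<in>C. {u, v} \<in> E"
  shows "split_partition n E (insert v C) (I - {v})"
  using assms unfolding split_partition_def is_clique_def is_indep_def
  by (auto simp: insert_commute)

lemma split_partition_move_to_indep:
  assumes "split_partition n E C I" "u \<in> C" "\<forall>v\<in>I. {u, v} \<notin> E"
  shows "split_partition n E (C - {u}) (insert u I)"
  using assms unfolding split_partition_def is_clique_def is_indep_def
  by (auto simp: insert_commute)

lemma split_partition_unique:
  assumes sp: "split_partition n E C I" and a: "clique_maximal n C E" and b: "indep_maximal n C E"
    and sp': "split_partition n E C' I'"
  shows "C' = C"
proof -
  have I: "I = {1..n} - C" "C \<subseteq> {1..n}" and I': "I' = {1..n} - C'" "C' \<subseteq> {1..n}"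
    using split_partition_indep_eq[OF sp] split_partition_indep_eq[OF sp'] by auto
  have cl: "is_clique E C'" "is_indep E I" "is_indep E I'"
    using sp sp' unfolding split_partition_def by auto
  have neighbour_in_C': "w \<in> C'" if "u \<in> C - C'" "w \<in> I" "{u, w} \<in> E" for u w
  proof (rule ccontr)
    assume "w \<notin> C'"
    then have "u \<in> I'" "w \<in> I'" "u \<noteq> w" using that I I' by auto
    then show False using cl(3) \<open>{u, w} \<in> E\<close> unfolding is_indep_def by blast
  qed
  have "C' \<subseteq> C"
  proof
    fix v assume v: "v \<in> C'"
    show "v \<in> C"
    proof (rule ccontr)
      assume "v \<notin> C"
      with v I' I have vI: "v \<in> I" by auto
      from a vI I obtain u where u: "u \<in> C" "{u, v} \<notin> E" unfolding clique_maximal_def by blast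
      have "u \<notin> C'" using cl(1) v u vI I unfolding is_clique_def by auto
      from b u(1) I obtain w where w: "w \<in> I" "{u, w} \<in> E" unfolding indep_maximal_def by blast
      have "w \<in> C'" using neighbour_in_C' \<open>u \<notin> C'\<close> u w by blast
      have "v \<noteq> w" using u w by auto
      then have "{v, w} \<in> E" using cl(1) v \<open>w \<in> C'\<close> unfolding is_clique_def by auto
      moreover have "{v, w} \<notin> E" using cl(2) vI w \<open>v \<noteq> w\<close> unfolding is_indep_def by auto
      ultimately show False by simp
    qed
  qed
  moreover have "C \<subseteq> C'"
  proof
    fix u assume u: "u \<in> C"
    from b u I obtain w where w: "w \<in> I" "{u, w} \<in> E" unfolding indep_maximal_def by blast
    show "u \<in> C'"
      using neighbour_in_C' u w \<open>C' \<subseteq> C\<close> I by blast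
  qed
  ultimately show ?thesis by auto
qed

lemma rigid_graphs_disjoint: "E \<in> rigid_graphs n C \<Longrightarrow> E \<in> rigid_graphs n C' \<Longrightarrow> C = C'"
  unfolding rigid_graphs_def partition_graphs_def using split_partition_unique by blast

lemma rigid_graphs_clique_parts:
  assumes E: "E \<in> rigid_graphs n C" and n: "1 \<le> n"
  shows "C \<in> clique_parts n"
proof -
  have sp: "split_partition n E C ({1..n} - C)"
    and a: "clique_maximal n C E" and b: "indep_maximal n C E"
    using E unfolding rigid_graphs_def partition_graphs_def by auto
  have C: "C \<subseteq> {1..n}" using split_partition_indep_eq[OF sp] by auto
  then have fC: "finite C" by (rule finite_subset) simp
  \<comment> \<open>Alternating the two conditions yields two vertices on each side.\<close>
  obtain u0 where u0: "u0 \<in> C"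
    using a n unfolding clique_maximal_def by (cases "1 \<in> C") auto
  from b u0 obtain w1 where w1: "w1 \<in> {1..n} - C" "{u0, w1} \<in> E"
    unfolding indep_maximal_def by blast
  from a w1(1) obtain u1 where u1: "u1 \<in> C" "{u1, w1} \<notin> E"
    unfolding clique_maximal_def by blast
  from b u1(1) obtain w2 where w2: "w2 \<in> {1..n} - C" "{u1, w2} \<in> E"
    unfolding indep_maximal_def by blast
  have "u0 \<noteq> u1" "w1 \<noteq> w2" using w1 u1 w2 by auto
  have "2 = card {u0, u1}" using \<open>u0 \<noteq> u1\<close> by simp
  also have "\<dots> \<le> card C" using u0 u1 fC by (intro card_mono) auto
  finally have c: "2 \<le> card C" .
  have "2 = card {w1, w2}" using \<open>w1 \<noteq> w2\<close> by simp
  also have "\<dots> \<le> card ({1..n} - C)" using w1 w2 by (intro card_mono) auto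
  also have "\<dots> = n - card C" using C fC by (simp add: card_Diff_subset)
  finally show ?thesis using c C unfolding clique_parts_def by simp
qed

lemma split_graphs_empty_questioning_set_eq:
  "{E. E \<subseteq> all_edges n \<and> is_split_graph n E \<and> questioning_set n E = {}} = (\<Union>C. rigid_graphs n C)"
proof (intro equalityI subsetI)
  fix E assume "E \<in> {E. E \<subseteq> all_edges n \<and> is_split_graph n E \<and> questioning_set n E = {}}"
  then have E: "E \<subseteq> all_edges n" and q: "questioning_set n E = {}" and "is_split_graph n E"
    by auto
  then obtain C I where sp: "split_partition n E C I" unfolding is_split_graph_def by auto
  have I: "I = {1..n} - C" using split_partition_indep_eq[OF sp] by auto
  have "clique_maximal n C E"
    unfolding clique_maximal_def I[symmetric]
  proof (rule ballI, rule ccontr)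
    fix v assume v: "v \<in> I" and "\<not> (\<exists>u\<in>C. {u, v} \<notin> E)"
    then have "split_partition n E (insert v C) (I - {v})"
      using split_partition_move_to_clique[OF sp] by blast
    then have "v \<in> questioning_set n E" using sp v unfolding questioning_set_def by blast
    with q show False by simp
  qed
  moreover have "indep_maximal n C E"
    unfolding indep_maximal_def I[symmetric]
  proof (rule ballI, rule ccontr)
    fix u assume u: "u \<in> C" and "\<not> (\<exists>v\<in>I. {u, v} \<in> E)"
    then have "split_partition n E (C - {u}) (insert u I)"
      using split_partition_move_to_indep[OF sp] by blast
    then have "u \<in> questioning_set n E" using sp u unfolding questioning_set_def by blast
    with q show False by simp
  qed
  ultimately show "E \<in> (\<Union>C. rigid_graphs n C)"
    using E sp I unfolding rigid_graphs_def partition_graphs_def by auto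
next
  fix E assume "E \<in> (\<Union>C. rigid_graphs n C)"
  then obtain C where "E \<in> rigid_graphs n C" by auto
  then have sp: "split_partition n E C ({1..n} - C)" and E: "E \<subseteq> all_edges n"
    and a: "clique_maximal n C E" and b: "indep_maximal n C E"
    unfolding rigid_graphs_def partition_graphs_def by auto
  have "v \<notin> questioning_set n E" for v
  proof
    assume "v \<in> questioning_set n E"
    then obtain C1 I1 C2 I2 where "split_partition n E C1 I1" "v \<in> C1"
      and "split_partition n E C2 I2" "v \<in> I2"
      unfolding questioning_set_def by blast
    then show False
      using split_partition_unique[OF sp a b] split_partition_indep_eq by blast
  qed
  then show "E \<in> {E. E \<subseteq> all_edges n \<and> is_split_graph n E \<and> questioning_set n E = {}}"
    using E sp unfolding is_split_graph_def by auto
qed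

lemma H_eq_sum_rigid_graphs:
  assumes "1 \<le> n"
  shows "H n = (\<Sum>C\<in>clique_parts n. card (rigid_graphs n C))"
proof -
  have "(\<Union>C. rigid_graphs n C) = (\<Union>C\<in>clique_parts n. rigid_graphs n C)"
    using rigid_graphs_clique_parts[OF _ assms] by blast
  moreover have "rigid_graphs n C \<inter> rigid_graphs n C' = {}" if "C \<noteq> C'" for C C'
    using rigid_graphs_disjoint that by blast
  ultimately show ?thesis
    unfolding H_def split_graphs_empty_questioning_set_eq
    by (simp add: card_UN_disjoint finite_clique_parts finite_rigid_graphs)
qed

section \<open>Counting graphs with a prescribed split partition\<close>

definition nbhd_in :: "nat set set \<Rightarrow> nat set \<Rightarrow> nat \<Rightarrow> nat set" where
  "nbhd_in E Y x = {y \<in> Y. {x, y} \<in> E}"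

definition graph_of_nbhds :: "nat set \<Rightarrow> nat set \<Rightarrow> (nat \<Rightarrow> nat set) \<Rightarrow> nat set set" where
  "graph_of_nbhds C X f = {{a, b} | a b. a \<in> C \<and> b \<in> C \<and> a \<noteq> b} \<union> {{x, y} | x y. x \<in> X \<and> y \<in> f x}"

lemma partition_graphs_subsetI:
  assumes E: "E \<in> partition_graphs n C" and E': "E' \<in> partition_graphs n C"
    and cross: "\<And>x y. x \<in> C \<Longrightarrow> y \<in> {1..n} - C \<Longrightarrow> {x, y} \<in> E \<Longrightarrow> {x, y} \<in> E'"
  shows "E \<subseteq> E'"
proof
  fix e assume e: "e \<in> E"
  have sp: "split_partition n E C ({1..n} - C)" "split_partition n E' C ({1..n} - C)"
    and "e \<in> all_edges n"
    using E E' e unfolding partition_graphs_def by auto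
  then obtain a b where ab: "e = {a, b}" "a \<noteq> b" "a \<in> {1..n}" "b \<in> {1..n}"
    by (elim in_all_edgesE)
  consider "a \<in> C" "b \<in> C" | "a \<in> C" "b \<notin> C" | "a \<notin> C" "b \<in> C" | "a \<notin> C" "b \<notin> C"
    by blast
  then show "e \<in> E'"
  proof cases
    case 1
    then show ?thesis using sp(2) ab unfolding split_partition_def is_clique_def by auto
  next
    case 2
    then show ?thesis using cross[of a b] ab e by auto
  next
    case 3
    then show ?thesis using cross[of b a] ab e by (auto simp: insert_commute)
  next
    case 4
    then show ?thesis using sp(1) ab e unfolding split_partition_def is_indep_def by auto
  qed
qed

text \<open>The \<open>C\<close>-\<open>I\<close> edges are recorded as the neighbourhoods, inside one side \<open>Y\<close>, of the
  vertices of the other side \<open>X\<close>; both orientations are needed below.\<close>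

context
  fixes n :: nat and C X Y :: "nat set"
  assumes C: "C \<subseteq> {1..n}"
    and XY: "(X = C \<and> Y = {1..n} - C) \<or> (X = {1..n} - C \<and> Y = C)"
begin

private lemma cross_pair_cases: "x \<in> X \<Longrightarrow> y \<in> Y \<Longrightarrow> (x \<in> C \<and> y \<notin> C) \<or> (y \<in> C \<and> x \<notin> C)"
  using XY by auto

private lemma cross_sides: "X \<subseteq> {1..n}" "Y \<subseteq> {1..n}" "X \<inter> Y = {}"
  using C XY by auto

lemma graph_of_nbhds_partition_graphs:
  assumes f: "f \<in> (\<Pi>\<^sub>E x\<in>X. Pow Y)"
  shows "graph_of_nbhds C X f \<in> partition_graphs n C"
proof -
  let ?G = "graph_of_nbhds C X f"
  have fY: "f x \<subseteq> Y" if "x \<in> X" for x using f that by auto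
  have "?G \<subseteq> all_edges n"
  proof
    fix e assume "e \<in> ?G"
    then consider a b where "e = {a, b}" "a \<in> C" "b \<in> C" "a \<noteq> b"
      | x y where "e = {x, y}" "x \<in> X" "y \<in> f x"
      unfolding graph_of_nbhds_def by blast
    then show "e \<in> all_edges n"
    proof cases
      case 1
      then show ?thesis using C by (auto simp: edge_in_all_edges_iff)
    next
      case 2
      then have "y \<in> Y" using fY by auto
      with 2 cross_sides show ?thesis by (auto simp: edge_in_all_edges_iff)
    qed
  qed
  moreover have "is_clique ?G C"
    unfolding is_clique_def graph_of_nbhds_def by blast
  moreover have "is_indep ?G ({1..n} - C)"
    unfolding is_indep_def
  proof (intro ballI impI notI)
    fix u v assume uv: "u \<in> {1..n} - C" "v \<in> {1..n} - C" and "{u, v} \<in> ?G"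
    then obtain x y where "{u, v} = {x, y}" "x \<in> X" "y \<in> f x"
      unfolding graph_of_nbhds_def by (auto simp: doubleton_eq_iff)
    with cross_pair_cases[of x y] fY uv show False by (auto simp: doubleton_eq_iff)
  qed
  ultimately show ?thesis
    using C unfolding partition_graphs_def split_partition_def by auto
qed

lemma restrict_nbhd_in_graph_of_nbhds:
  assumes f: "f \<in> (\<Pi>\<^sub>E x\<in>X. Pow Y)"
  shows "restrict (nbhd_in (graph_of_nbhds C X f) Y) X = f"
proof
  fix x
  have fY: "f x \<subseteq> Y" if "x \<in> X" for x using f that by auto
  have "nbhd_in (graph_of_nbhds C X f) Y x = f x" if x: "x \<in> X"
  proof (intro equalityI subsetI)
    fix y assume "y \<in> nbhd_in (graph_of_nbhds C X f) Y x"
    then have y: "y \<in> Y" and "{x, y} \<in> graph_of_nbhds C X f" unfolding nbhd_in_def by auto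
    then consider "x \<in> C" "y \<in> C" | x' y' where "{x, y} = {x', y'}" "x' \<in> X" "y' \<in> f x'"
      unfolding graph_of_nbhds_def by (auto simp: doubleton_eq_iff)
    then show "y \<in> f x"
    proof cases
      case 1
      with cross_pair_cases[OF x y] show ?thesis by auto
    next
      case 2
      with fY x y XY show ?thesis by (auto simp: doubleton_eq_iff)
    qed
  next
    fix y assume "y \<in> f x"
    then show "y \<in> nbhd_in (graph_of_nbhds C X f) Y x"
      using fY x unfolding nbhd_in_def graph_of_nbhds_def by blast
  qed
  then show "restrict (nbhd_in (graph_of_nbhds C X f) Y) X x = f x"
    using f by (auto simp: PiE_def extensional_def)
qed

lemma bij_betw_nbhd_in:
  "bij_betw (\<lambda>E. restrict (nbhd_in E Y) X) (partition_graphs n C) (\<Pi>\<^sub>E x\<in>X. Pow Y)"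
proof (rule bij_betwI')
  fix E E' assume E: "E \<in> partition_graphs n C" and E': "E' \<in> partition_graphs n C"
  show "(restrict (nbhd_in E Y) X = restrict (nbhd_in E' Y) X) = (E = E')"
  proof
    assume eq: "restrict (nbhd_in E Y) X = restrict (nbhd_in E' Y) X"
    have same_cross: "{x, y} \<in> E \<longleftrightarrow> {x, y} \<in> E'" if "x \<in> X" "y \<in> Y" for x y
      using fun_cong[OF eq, of x] that unfolding nbhd_in_def by auto
    have "{x, y} \<in> E \<longleftrightarrow> {x, y} \<in> E'" if "x \<in> C" "y \<in> {1..n} - C" for x y
      using XY same_cross[of x y] same_cross[of y x] that by (auto simp: insert_commute)
    then show "E = E'"
      using partition_graphs_subsetI[OF E E'] partition_graphs_subsetI[OF E' E] by blast
  qed simp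
next
  fix E show "restrict (nbhd_in E Y) X \<in> (\<Pi>\<^sub>E x\<in>X. Pow Y)"
    unfolding nbhd_in_def by auto
next
  fix f assume "f \<in> (\<Pi>\<^sub>E x\<in>X. Pow Y)"
  then show "\<exists>E\<in>partition_graphs n C. f = restrict (nbhd_in E Y) X"
    using graph_of_nbhds_partition_graphs restrict_nbhd_in_graph_of_nbhds by metis
qed

lemma card_partition_graphs_nbhd_filter:
  "card {E \<in> partition_graphs n C. \<forall>x\<in>X. P (nbhd_in E Y x)} = card {Z. Z \<subseteq> Y \<and> P Z} ^ card X"
proof -
  have "finite X" using C XY by (auto intro: finite_subset)
  have "bij_betw (\<lambda>E. restrict (nbhd_in E Y) X)
      {E \<in> partition_graphs n C. \<forall>x\<in>X. P (nbhd_in E Y x)}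
      {f \<in> (\<Pi>\<^sub>E x\<in>X. Pow Y). \<forall>x\<in>X. P (f x)}"
    by (rule bij_betw_Collect[OF bij_betw_nbhd_in]) simp
  then have "card {E \<in> partition_graphs n C. \<forall>x\<in>X. P (nbhd_in E Y x)}
      = card {f \<in> (\<Pi>\<^sub>E x\<in>X. Pow Y). \<forall>x\<in>X. P (f x)}"
    by (rule bij_betw_same_card)
  also have "{f \<in> (\<Pi>\<^sub>E x\<in>X. Pow Y). \<forall>x\<in>X. P (f x)} = (\<Pi>\<^sub>E x\<in>X. {Z. Z \<subseteq> Y \<and> P Z})"
    unfolding PiE_def Pi_def by blast
  also have "card \<dots> = card {Z. Z \<subseteq> Y \<and> P Z} ^ card X"
    using \<open>finite X\<close> by (simp add: card_PiE)
  finally show ?thesis .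
qed

end

lemma card_subsets_avoiding:
  assumes "finite Y" "y \<in> Y"
  shows "card {Z. Z \<subseteq> Y \<and> y \<notin> Z} = 2 ^ (card Y - 1)"
proof -
  have "{Z. Z \<subseteq> Y \<and> y \<notin> Z} = Pow (Y - {y})" by auto
  then show ?thesis using assms by (simp add: card_Pow)
qed

lemma card_subsets_containing:
  assumes "finite Y" "y \<in> Y"
  shows "card {Z. Z \<subseteq> Y \<and> y \<in> Z} = 2 ^ (card Y - 1)"
proof -
  have "{Z. Z \<subseteq> Y \<and> y \<in> Z} = insert y ` Pow (Y - {y})"
  proof (intro equalityI subsetI)
    fix Z assume "Z \<in> {Z. Z \<subseteq> Y \<and> y \<in> Z}"
    then have "Z = insert y (Z - {y})" "Z - {y} \<in> Pow (Y - {y})" by auto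
    then show "Z \<in> insert y ` Pow (Y - {y})" by (rule image_eqI)
  qed (use assms(2) in auto)
  moreover have "inj_on (insert y) (Pow (Y - {y}))"
    by (rule inj_onI) blast
  ultimately show ?thesis using assms by (simp add: card_image card_Pow)
qed

lemma card_filter_bex_le:
  assumes "finite Y" and "\<And>y. y \<in> Y \<Longrightarrow> card {x \<in> A. Q y x} \<le> m"
  shows "card {x \<in> A. \<exists>y\<in>Y. Q y x} \<le> card Y * m"
proof -
  have "{x \<in> A. \<exists>y\<in>Y. Q y x} = (\<Union>y\<in>Y. {x \<in> A. Q y x})" by auto
  then have "card {x \<in> A. \<exists>y\<in>Y. Q y x} \<le> (\<Sum>y\<in>Y. card {x \<in> A. Q y x})"
    using card_UN_le[OF assms(1)] by simp
  also have "\<dots> \<le> card Y * m"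
    using sum_bounded_above[of Y "\<lambda>y. card {x \<in> A. Q y x}" m] assms(2) by simp
  finally show ?thesis .
qed

lemma clique_maximal_iff_nbhd_in:
  "clique_maximal n C E \<longleftrightarrow> (\<forall>v\<in>{1..n} - C. nbhd_in E C v \<noteq> C)"
  unfolding clique_maximal_def nbhd_in_def by (auto simp: insert_commute)

lemma indep_maximal_iff_nbhd_in:
  "indep_maximal n C E \<longleftrightarrow> (\<forall>u\<in>C. nbhd_in E ({1..n} - C) u \<noteq> {})"
  unfolding indep_maximal_def nbhd_in_def by blast

lemma not_clique_maximal_iff_nbhd_in:
  "\<not> clique_maximal n C E \<longleftrightarrow> (\<exists>v\<in>{1..n} - C. \<forall>u\<in>C. v \<in> nbhd_in E ({1..n} - C) u)"
  unfolding clique_maximal_def nbhd_in_def by auto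

lemma not_indep_maximal_iff_nbhd_in:
  "\<not> indep_maximal n C E \<longleftrightarrow> (\<exists>u\<in>C. \<forall>v\<in>{1..n} - C. u \<notin> nbhd_in E C v)"
  unfolding indep_maximal_def nbhd_in_def by (auto simp: insert_commute)

lemma card_complement:
  "C \<subseteq> {1..n} \<Longrightarrow> card ({1..n} - C) = n - card C"
  by (simp add: card_Diff_subset finite_subset)

lemma card_clique_maximal:
  assumes C: "C \<subseteq> {1..n}"
  shows "card {E \<in> partition_graphs n C. clique_maximal n C E} = (2 ^ card C - 1) ^ (n - card C)"
proof -
  have "finite C" using C by (rule finite_subset) simp
  have "{Z. Z \<subseteq> C \<and> Z \<noteq> C} = Pow C - {C}" by auto
  then have "card {Z. Z \<subseteq> C \<and> Z \<noteq> C} = 2 ^ card C - 1"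
    using \<open>finite C\<close> by (simp add: card_Pow)
  then show ?thesis
    using card_partition_graphs_nbhd_filter[OF C, of "{1..n} - C" C "\<lambda>Z. Z \<noteq> C"]
      card_complement[OF C]
    by (simp add: clique_maximal_iff_nbhd_in)
qed

lemma card_indep_maximal:
  assumes C: "C \<subseteq> {1..n}"
  shows "card {E \<in> partition_graphs n C. indep_maximal n C E} = (2 ^ (n - card C) - 1) ^ card C"
proof -
  have "{Z. Z \<subseteq> {1..n} - C \<and> Z \<noteq> {}} = Pow ({1..n} - C) - {{}}" by auto
  then have "card {Z. Z \<subseteq> {1..n} - C \<and> Z \<noteq> {}} = 2 ^ (n - card C) - 1"
    using card_complement[OF C] by (simp add: card_Pow)
  then show ?thesis
    using card_partition_graphs_nbhd_filter[OF C, of C "{1..n} - C" "\<lambda>Z. Z \<noteq> {}"]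
    by (simp add: indep_maximal_iff_nbhd_in)
qed

lemma card_not_indep_maximal:
  assumes C: "C \<subseteq> {1..n}"
  shows "card {E \<in> partition_graphs n C. \<not> indep_maximal n C E}
    \<le> card C * (2 ^ (card C - 1)) ^ (n - card C)"
proof -
  have "finite C" using C by (rule finite_subset) simp
  have "card {E \<in> partition_graphs n C. \<forall>v\<in>{1..n} - C. u \<notin> nbhd_in E C v}
      = (2 ^ (card C - 1)) ^ (n - card C)" if "u \<in> C" for u
    using card_partition_graphs_nbhd_filter[OF C, of "{1..n} - C" C "\<lambda>Z. u \<notin> Z"]
      card_subsets_avoiding[OF \<open>finite C\<close> that] card_complement[OF C] by simp
  then show ?thesis
    unfolding not_indep_maximal_iff_nbhd_in
    by (intro card_filter_bex_le \<open>finite C\<close>) simp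
qed

lemma card_not_clique_maximal:
  assumes C: "C \<subseteq> {1..n}"
  shows "card {E \<in> partition_graphs n C. \<not> clique_maximal n C E}
    \<le> (n - card C) * (2 ^ (n - card C - 1)) ^ card C"
proof -
  have "card {E \<in> partition_graphs n C. \<forall>u\<in>C. v \<in> nbhd_in E ({1..n} - C) u}
      = (2 ^ (n - card C - 1)) ^ card C" if "v \<in> {1..n} - C" for v
    using card_partition_graphs_nbhd_filter[OF C, of C "{1..n} - C" "\<lambda>Z. v \<in> Z"]
      card_subsets_containing[OF _ that] card_complement[OF C] by simp
  then have "card {E \<in> partition_graphs n C. \<not> clique_maximal n C E}
      \<le> card ({1..n} - C) * (2 ^ (n - card C - 1)) ^ card C"
    unfolding not_clique_maximal_iff_nbhd_in
    by (intro card_filter_bex_le) simp_all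
  then show ?thesis using card_complement[OF C] by simp
qed

section \<open>The sum \<open>S\<^sub>n\<close> as a count of relaxed graphs\<close>

definition relaxed_graphs :: "nat \<Rightarrow> nat set \<Rightarrow> nat set set set" where
  "relaxed_graphs n C = {E \<in> partition_graphs n C.
     if card C \<le> n div 2 then clique_maximal n C E else indep_maximal n C E}"

definition S_summand :: "nat \<Rightarrow> nat \<Rightarrow> nat" where
  "S_summand n c = (if c \<le> n div 2 then (2 ^ c - 1) ^ (n - c) else (2 ^ (n - c) - 1) ^ c)"

lemma card_relaxed_graphs:
  "C \<subseteq> {1..n} \<Longrightarrow> card (relaxed_graphs n C) = S_summand n (card C)"
  unfolding relaxed_graphs_def S_summand_def using card_clique_maximal card_indep_maximal by auto

lemma rigid_graphs_subset_relaxed_graphs: "rigid_graphs n C \<subseteq> relaxed_graphs n C"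
  unfolding rigid_graphs_def relaxed_graphs_def by auto

lemma finite_relaxed_graphs: "finite (relaxed_graphs n C)"
  unfolding relaxed_graphs_def using finite_partition_graphs by auto

lemma S_eq_sum_S_summand: "S n = (\<Sum>c = 2..n - 2. (n choose c) * S_summand n c)"
proof -
  have "{2..n - 2} = {2..n div 2} \<union> {n div 2 + 1..n - 2}" by auto
  then have "(\<Sum>c = 2..n - 2. (n choose c) * S_summand n c)
      = (\<Sum>c = 2..n div 2. (n choose c) * S_summand n c)
        + (\<Sum>c = n div 2 + 1..n - 2. (n choose c) * S_summand n c)"
    by (simp add: sum.union_disjoint)
  also have "\<dots> = S n"
    unfolding S_def S_summand_def by (intro arg_cong2[where f = "(+)"] sum.cong) auto
  finally show ?thesis by simp
qed

lemma S_eq_sum_relaxed_graphs: "S n = (\<Sum>C\<in>clique_parts n. card (relaxed_graphs n C))"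
proof -
  have "clique_parts n = (\<Union>c\<in>{2..n - 2}. {C. C \<subseteq> {1..n} \<and> card C = c})"
    unfolding clique_parts_def by auto
  then have "(\<Sum>C\<in>clique_parts n. card (relaxed_graphs n C))
      = (\<Sum>c = 2..n - 2. \<Sum>C\<in>{C. C \<subseteq> {1..n} \<and> card C = c}. card (relaxed_graphs n C))"
    by (simp only:) (rule sum.UNION_disjoint, auto)
  also have "\<dots> = (\<Sum>c = 2..n - 2. (n choose c) * S_summand n c)"
  proof (rule sum.cong[OF refl])
    fix c
    have "(\<Sum>C\<in>{C. C \<subseteq> {1..n} \<and> card C = c}. card (relaxed_graphs n C))
        = card {C. C \<subseteq> {1..n} \<and> card C = c} * S_summand n c"
      by (simp add: card_relaxed_graphs)
    then show "(\<Sum>C\<in>{C. C \<subseteq> {1..n} \<and> card C = c}. card (relaxed_graphs n C))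
        = (n choose c) * S_summand n c"
      by (simp add: n_subsets)
  qed
  finally show ?thesis using S_eq_sum_S_summand by simp
qed

section \<open>Relative size of the non-rigid relaxed graphs\<close>

lemma two_power_pred_le: "2 \<le> a \<Longrightarrow> (2::real) ^ (a - 1) \<le> 2/3 * (2 ^ a - 1)"
proof -
  assume "2 \<le> a"
  then obtain k where "a = k + 2" by (metis add.commute le_Suc_ex)
  moreover have "(1::real) \<le> 2 ^ k" by simp
  ultimately show ?thesis by (simp add: power_add)
qed

lemma relative_defect_le:
  assumes a: "2 \<le> a" "a \<le> n" and b: "real n / 2 \<le> real b"
  shows "real (a * (2 ^ (a - 1)) ^ b)
    \<le> real n * (3/2) powr (- real n / 2) * real ((2 ^ a - 1) ^ b)"
proof -
  have "((2::real) ^ (a - 1)) ^ b \<le> (2/3 * (2 ^ a - 1)) ^ b"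
    by (rule power_mono[OF two_power_pred_le[OF a(1)]]) simp
  also have "\<dots> = (3/2) powr (- real b) * (2 ^ a - 1) ^ b"
    unfolding power_mult_distrib by (simp add: powr_minus powr_realpow power_divide)
  also have "\<dots> \<le> (3/2) powr (- real n / 2) * (2 ^ a - 1) ^ b"
    using b by (intro mult_right_mono powr_mono) auto
  finally have "real a * ((2::real) ^ (a - 1)) ^ b
      \<le> real n * ((3/2) powr (- real n / 2) * (2 ^ a - 1) ^ b)"
    using a(2) by (intro mult_mono) auto
  moreover have "real ((2 ^ a - 1) ^ b) = ((2::real) ^ a - 1) ^ b"
    by (simp add: of_nat_diff)
  ultimately show ?thesis by (simp add: mult.assoc)
qed

lemma relaxed_minus_rigid_le:
  assumes "C \<in> clique_parts n"
  shows "real (card (relaxed_graphs n C)) - real (card (rigid_graphs n C))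
    \<le> real n * (3/2) powr (- real n / 2) * real (card (relaxed_graphs n C))"
proof -
  have C: "C \<subseteq> {1..n}" and c: "2 \<le> card C" "card C \<le> n - 2"
    using assms unfolding clique_parts_def by auto
  obtain a b where ab: "2 \<le> a" "a \<le> n" "real n / 2 \<le> real b"
    and defect: "card (relaxed_graphs n C - rigid_graphs n C) \<le> a * (2 ^ (a - 1)) ^ b"
    and relaxed: "card (relaxed_graphs n C) = (2 ^ a - 1) ^ b"
  proof (cases "card C \<le> n div 2")
    case True
    have "relaxed_graphs n C - rigid_graphs n C
        \<subseteq> {E \<in> partition_graphs n C. \<not> indep_maximal n C E}"
      using True unfolding relaxed_graphs_def rigid_graphs_def by auto
    then have "card (relaxed_graphs n C - rigid_graphs n C)
        \<le> card {E \<in> partition_graphs n C. \<not> indep_maximal n C E}"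
      by (rule card_mono[rotated]) (simp add: finite_partition_graphs)
    also have "\<dots> \<le> card C * (2 ^ (card C - 1)) ^ (n - card C)"
      by (rule card_not_indep_maximal[OF C])
    finally have "card (relaxed_graphs n C - rigid_graphs n C)
        \<le> card C * (2 ^ (card C - 1)) ^ (n - card C)" .
    moreover have "card (relaxed_graphs n C) = (2 ^ card C - 1) ^ (n - card C)"
      using card_relaxed_graphs[OF C] True unfolding S_summand_def by simp
    moreover have "real n / 2 \<le> real (n - card C)"
      using True by (simp add: of_nat_diff field_simps)
    ultimately show ?thesis using that[of "card C" "n - card C"] c by auto
  next
    case False
    have "relaxed_graphs n C - rigid_graphs n C
        \<subseteq> {E \<in> partition_graphs n C. \<not> clique_maximal n C E}"
      using False unfolding relaxed_graphs_def rigid_graphs_def by auto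
    then have "card (relaxed_graphs n C - rigid_graphs n C)
        \<le> card {E \<in> partition_graphs n C. \<not> clique_maximal n C E}"
      by (rule card_mono[rotated]) (simp add: finite_partition_graphs)
    also have "\<dots> \<le> (n - card C) * (2 ^ (n - card C - 1)) ^ card C"
      by (rule card_not_clique_maximal[OF C])
    finally have "card (relaxed_graphs n C - rigid_graphs n C)
        \<le> (n - card C) * (2 ^ (n - card C - 1)) ^ card C" .
    moreover have "card (relaxed_graphs n C) = (2 ^ (n - card C) - 1) ^ card C"
      using card_relaxed_graphs[OF C] False unfolding S_summand_def by simp
    moreover have "real n / 2 \<le> real (card C)"
      using False by (simp add: field_simps)
    ultimately show ?thesis using that[of "n - card C" "card C"] c by auto
  qed
  have "real (card (relaxed_graphs n C)) - real (card (rigid_graphs n C))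
      = real (card (relaxed_graphs n C - rigid_graphs n C))"
    using card_mono[OF finite_relaxed_graphs rigid_graphs_subset_relaxed_graphs]
    by (simp add: card_Diff_subset finite_rigid_graphs rigid_graphs_subset_relaxed_graphs of_nat_diff)
  also have "\<dots> \<le> real (a * (2 ^ (a - 1)) ^ b)"
    using defect by linarith
  also have "\<dots> \<le> real n * (3/2) powr (- real n / 2) * real (card (relaxed_graphs n C))"
    unfolding relaxed by (rule relative_defect_le[OF ab])
  finally show ?thesis .
qed

lemma le_one_plus_mult_of_defect:
  fixes d e s h :: real
  assumes "0 \<le> d" "2 * d \<le> e" "e \<le> 1" "0 \<le> s" "s - h \<le> d * s"
  shows "s \<le> (1 + e) * h"
proof -
  have "e * d \<le> d" using assms(1,3) mult_right_mono[of e 1 d] by simp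
  then have "1 \<le> (1 + e) * (1 - d)" using assms(2) by (simp add: algebra_simps)
  then have "s \<le> (1 + e) * ((1 - d) * s)"
    using assms(4) mult_right_mono[of 1 "(1 + e) * (1 - d)" s] by (simp add: mult.assoc)
  also have "\<dots> \<le> (1 + e) * h"
    using assms by (intro mult_left_mono) (auto simp: algebra_simps)
  finally show ?thesis .
qed

theorem lemma8p9:
  shows "\<exists>N::nat. \<forall>n\<ge>N. H n \<le> S n \<and>
           real (S n) \<le> (1 + (3/2) powr (- real n / 3)) * real (H n)"
proof -
  have "eventually (\<lambda>n. 1 \<le> n \<and>
      2 * (real n * (3/2) powr (- real n / 2)) \<le> (3/2) powr (- real n / 3)) sequentially"
    by (intro eventually_conj eventually_ge_at_top) real_asymp
  then obtain N where N: "\<And>n. N \<le> n \<Longrightarrow> 1 \<le> n \<and>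
      2 * (real n * (3/2) powr (- real n / 2)) \<le> (3/2) powr (- real n / 3)"
    unfolding eventually_sequentially by blast
  have "H n \<le> S n \<and> real (S n) \<le> (1 + (3/2) powr (- real n / 3)) * real (H n)" if "N \<le> n" for n
  proof
    have H: "H n = (\<Sum>C\<in>clique_parts n. card (rigid_graphs n C))"
      using N[OF that] by (simp add: H_eq_sum_rigid_graphs)
    note S = S_eq_sum_relaxed_graphs[of n]
    show "H n \<le> S n"
      unfolding H S
      by (intro sum_mono card_mono finite_relaxed_graphs rigid_graphs_subset_relaxed_graphs)
    have "real (S n) - real (H n) \<le> real n * (3/2) powr (- real n / 2) * real (S n)"
      unfolding H S using relaxed_minus_rigid_le
      by (simp add: sum_subtractf[symmetric] sum_distrib_left sum_mono)
    moreover have "(3/2::real) powr (- real n / 3) \<le> 1"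
      using powr_mono[of "- real n / 3" 0 "3/2 :: real"] by simp
    ultimately show "real (S n) \<le> (1 + (3/2) powr (- real n / 3)) * real (H n)"
      using N[OF that] by (intro le_one_plus_mult_of_defect) auto
  qed
  then show ?thesis by blast
qed

end
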